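(* For all integers $n\ge 0$, all $\mathbf{s}=(s_1,\dots,s_d)\in\mathbb{N}^d$ and all $y\in[-\pi/2,\pi/2]$, \[ \sum_{n_1>\cdots>n_d>n}\frac{a_{n_1}(\sin y)}{(2n_1)^{s_1}\cdots(2n_d)^{s_d}} =\cot y\,\frac{d}{dy}\int_0^y p_{s_1}\circ\cdots\circ p_{s_d}\circ a_n(\sin t)\tan t\,dt , \] where for $y=\pm\pi/2$ the right-hand side is understood as the limit as $y\to\pm\pi/2$.
   Context: $\mathbb{N}=\{1,2,\dots\}$. Set $a_0(x)=1$ and $a_n(x)=\frac{1}{4^n}\binom{2n}{n}x^{2n}$ for $n\ge1$. Iterated integral notation: for 1-forms $f_1(t)dt,\dots,f_r(t)dt$, $\int_0^y f_1(t)dt\circ\cdots\circ f_r(t)dt:=\int_{y>t_1>\cdots>t_r>0}f_1(t_1)\cdots f_r(t_r)\,dt_1\cdots dt_r$ (the symbol $\circ$ may be omitted); $(\omega)^k$ denotes $\omega$ repeated $k$ times ($k=0$: empty). Words mixing functions and 1-forms are expanded by linearity using the rule that for functions $F,G$ and 1-forms $f\,dt$, $g\,dt$: $[F+f\,dt\circ G]\circ g\,dt:=F g\,dt+f\,dt\circ (Gg)\,dt$; i.e. a function placed after $\circ$ multiplies the 1-form that follows it. For $s\in\mathbb{N}$ define $p_s(t):=\tan t\,dt\,\left(\cot t\,dt\right)^{s-1}\left(1-\csc t\,dt\circ\sec t\right)$. *)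

theory Defs
  imports "HOL-Analysis.Analysis"
begin

definition a :: "nat \<Rightarrow> real \<Rightarrow> real" where
  "a n x = (if n = 0 then 1 else (real (2*n choose n) / 4 ^ n) * x ^ (2*n))"

definition sec :: "real \<Rightarrow> real" where "sec t = 1 / cos t"
definition csc :: "real \<Rightarrow> real" where "csc t = 1 / sin t"

text \<open>Iterated integral  int_0^y f_1 dt o ... o f_r dt  (signed, oriented interval integrals)\<close>
fun iter_int :: "(real \<Rightarrow> real) list \<Rightarrow> real \<Rightarrow> real" where
  "iter_int [] y = 1"
| "iter_int (f # fs) y = (LBINT t = ereal 0..ereal y. f t * iter_int fs t)"

text \<open>Letters of words mixing 1-forms (Form f = f(t) dt) and functions (Fun F).\<close>
datatype letter = Form "real \<Rightarrow> real" | Fun "real \<Rightarrow> real"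

text \<open>Expansion rule: a function placed after o multiplies the 1-form that follows it.\<close>
fun forms :: "letter list \<Rightarrow> (real \<Rightarrow> real) list" where
  "forms [] = []"
| "forms (Form f # w) = f # forms w"
| "forms (Fun g # Form f # w) = (\<lambda>t. g t * f t) # forms w"
| "forms (Fun g # Fun h # w) = forms (Fun (\<lambda>t. g t * h t) # w)"
| "forms [Fun g] = []"

type_synonym lword = "(real \<times> letter list) list"

definition cat :: "lword \<Rightarrow> lword \<Rightarrow> lword" where
  "cat A B = [(c * e, v @ w). (c, v) \<leftarrow> A, (e, w) \<leftarrow> B]"

text \<open>p_s = tan dt (cot dt)^(s-1) (1 - csc dt o sec)\<close>
definition p :: "nat \<Rightarrow> lword" where
  "p s = [(1, Form tan # replicate (s - 1) (Form cot)),
          (-1, Form tan # replicate (s - 1) (Form cot) @ [Form csc, Fun sec])]"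

definition W :: "nat list \<Rightarrow> nat \<Rightarrow> lword" where
  "W s n = foldr cat (map p s) [(1, [Fun (\<lambda>t. a n (sin t)), Form tan])]"

definition iter_int_lw :: "lword \<Rightarrow> real \<Rightarrow> real" where
  "iter_int_lw A y = (\<Sum>(c, w) \<leftarrow> A. c * iter_int (forms w) y)"

end

theory Submission
  imports Defs
begin

text \<open>Let \<open>b m = (2m choose m) / 4^m\<close>, let \<open>c m\<close> be the sum of \<open>1 / \<Prod>\<^sub>i (2 n\<^sub>i)^s\<^sub>i\<close> over the chains
  \<open>m = n\<^sub>1 > \<dots> > n\<^sub>d > n\<close>, and \<open>S y = \<Sum>\<^sub>m c m * a m (sin y)\<close>; regrouping by \<open>n\<^sub>1\<close>, \<open>S y\<close> is the
  left-hand side. On \<open>(-pi/2, pi/2)\<close> the iterated integral equals \<open>\<integral>\<^sub>0\<^sup>y tan t * S t dt\<close>, by induction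
  on \<open>s\<close>: prefixing \<open>p (k+1)\<close> turns the density \<open>tan * S\<close> into
  \<open>tan * (\<integral> cot)\<^sup>k (\<integral> tan * S - \<integral> csc * \<integral> sec * tan * S)\<close>. In the variable \<open>u = sin\<^sup>2 y\<close> the
  recursion \<open>2(m+1) b (m+1) = (2m+1) b m\<close> becomes a differential equation showing that
  \<open>sin\<^sup>2 y / cos y * S y - cos y * S\<^sub>P y\<close> is a primitive of \<open>sec * tan * S\<close>, where \<open>S\<^sub>P\<close> has the partial
  sums \<open>P m = \<Sum>\<^sub>k\<^sub><\<^sub>m c k\<close> as coefficients. So the bracket is the series with coefficients
  \<open>P m / 2m\<close>, and every \<open>\<integral> cot\<close> divides them by \<open>2m\<close> once more: this is the recursion defining
  \<open>c\<close>. Finally \<open>c m = O(m powr (-3/4))\<close> and \<open>b m \<le> m powr (-1/2)\<close> make \<open>\<Sum> c m * b m\<close> finite,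
  so \<open>S\<close> is continuous on \<open>[-pi/2, pi/2]\<close>, which gives the limits at the endpoints.\<close>

section \<open>Primitives on \<open>(-pi/2, pi/2)\<close>\<close>

abbreviation Ipi :: "real set" where "Ipi \<equiv> {-(pi/2)<..<pi/2}"

lemma cos_gt_zero_Ipi: "t \<in> Ipi \<Longrightarrow> cos t > 0"
  by (intro cos_gt_zero_pi) auto

lemma sin_eq_0_Ipi: "t \<in> Ipi \<Longrightarrow> sin t = 0 \<longleftrightarrow> t = 0"
  using sin_eq_0_pi[of t] by auto

lemma continuous_on_tan_Ipi: "continuous_on Ipi tan"
  by (rule continuous_at_imp_continuous_on) (auto intro!: continuous_intros dest: cos_gt_zero_Ipi)

lemma continuous_on_sec_Ipi: "continuous_on Ipi sec"
  unfolding sec_def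
  by (rule continuous_at_imp_continuous_on) (auto intro!: continuous_intros dest: cos_gt_zero_Ipi)

definition prim :: "(real \<Rightarrow> real) \<Rightarrow> real \<Rightarrow> real" where
  "prim h y = (LBINT t=ereal 0..ereal y. h t)"

lemma iter_int_Cons_prim: "iter_int (f # fs) = prim (\<lambda>t. f t * iter_int fs t)"
  by (simp add: prim_def fun_eq_iff)

lemma prim_0 [simp]: "prim h 0 = 0"
  by (simp add: prim_def)

lemma has_real_derivative_prim:
  assumes h: "continuous_on Ipi h" and y: "y \<in> Ipi"
  shows "(prim h has_real_derivative h y) (at y)"
proof -
  define d where "d = (-pi/2 + min 0 y)/2"
  define e where "e = (pi/2 + max 0 y)/2"
  have de: "-pi/2 < d" "d < min 0 y" "max 0 y < e" "e < pi/2"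
    using y pi_gt_zero unfolding d_def e_def by (auto simp: min_def max_def)
  have c: "continuous_on {d..e} h"
    by (rule continuous_on_subset[OF h]) (use de in auto)
  have "(prim h has_vector_derivative h y) (at y within {d..e})"
    unfolding prim_def[abs_def] by (rule interval_integral_FTC2[OF _ _ c]) (use de in auto)
  then have "(prim h has_vector_derivative h y) (at y within {d<..<e})"
    by (rule has_vector_derivative_within_subset) auto
  then have "(prim h has_vector_derivative h y) (at y)"
    using de by (subst (asm) has_vector_derivative_within_open) auto
  then show ?thesis
    by (simp add: has_real_derivative_iff_has_vector_derivative)
qed

lemma prim_eq_diff:
  assumes h: "continuous_on Ipi h" and F: "\<And>x. x \<in> Ipi \<Longrightarrow> (F has_real_derivative h x) (at x)"
    and y: "y \<in> Ipi"
  shows "prim h y = F y - F 0"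
proof -
  have sub: "{min 0 y..max 0 y} \<subseteq> Ipi" using y by auto
  show ?thesis
    unfolding prim_def
  proof (rule interval_integral_FTC_finite)
    show "continuous_on {min 0 y..max 0 y} h" by (rule continuous_on_subset[OF h sub])
    show "(F has_vector_derivative h x) (at x within {min 0 y..max 0 y})"
      if "min 0 y \<le> x" "x \<le> max 0 y" for x
    proof -
      have "x \<in> Ipi" using sub that by auto
      then show ?thesis
        using F[of x] by (simp add: has_real_derivative_iff_has_vector_derivative has_vector_derivative_at_within)
    qed
  qed
qed

lemma prim_cong:
  assumes "\<And>t. t \<in> Ipi \<Longrightarrow> f t = g t" and y: "y \<in> Ipi"
  shows "prim f y = prim g y"
  unfolding prim_def
proof (rule interval_integral_cong)
  fix x assume "x \<in> einterval (min (ereal 0) (ereal y)) (max (ereal 0) (ereal y))"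
  then have "x \<in> Ipi" using y by (auto simp: einterval_iff min_def max_def split: if_splits)
  then show "f x = g x" using assms by auto
qed

lemma continuous_on_prim: "continuous_on Ipi h \<Longrightarrow> continuous_on Ipi (prim h)"
  using has_real_derivative_prim by (meson DERIV_isCont continuous_at_imp_continuous_on)

lemma prim_lincomb:
  assumes f: "continuous_on Ipi f" and g: "continuous_on Ipi g" and y: "y \<in> Ipi"
  shows "prim (\<lambda>t. c * f t + d * g t) y = c * prim f y + d * prim g y"
proof -
  have "prim (\<lambda>t. c * f t + d * g t) y
      = (\<lambda>y. c * prim f y + d * prim g y) y - (\<lambda>y. c * prim f y + d * prim g y) 0"
    by (rule prim_eq_diff[OF _ _ y])
      (auto intro!: continuous_intros f g derivative_eq_intros
        has_real_derivative_prim[OF f] has_real_derivative_prim[OF g])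
  then show ?thesis by simp
qed

lemma prim_sum_list:
  assumes "\<And>x. x \<in> set xs \<Longrightarrow> continuous_on Ipi (h x)" and y: "y \<in> Ipi"
  shows "prim (\<lambda>t. \<Sum>x\<leftarrow>xs. c x * h x t) y = (\<Sum>x\<leftarrow>xs. c x * prim (h x) y)"
proof -
  have "prim (\<lambda>t. \<Sum>x\<leftarrow>xs. c x * h x t) y = (\<Sum>x\<leftarrow>xs. c x * prim (h x) y)
      \<and> continuous_on Ipi (\<lambda>t. \<Sum>x\<leftarrow>xs. c x * h x t)"
    using assms(1)
  proof (induction xs)
    case (Cons x xs)
    then have "continuous_on Ipi (h x)" "continuous_on Ipi (\<lambda>t. \<Sum>x\<leftarrow>xs. c x * h x t)" by auto
    with prim_lincomb[OF this y, of "c x" 1] Cons show ?case by (auto intro!: continuous_intros)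
  qed (simp add: prim_def)
  then show ?thesis ..
qed

text \<open>\<open>vanishing_prim F\<close> says that \<open>F\<close> is \<open>C\<^sup>1\<close> on \<open>Ipi\<close> with \<open>F 0 = F' 0 = 0\<close>, which is what
  keeps \<open>csc t * F t\<close> continuous at \<open>0\<close>.\<close>

definition vanishing :: "(real \<Rightarrow> real) \<Rightarrow> bool" where
  "vanishing h \<longleftrightarrow> continuous_on Ipi h \<and> h 0 = 0"

definition vanishing_prim :: "(real \<Rightarrow> real) \<Rightarrow> bool" where
  "vanishing_prim F \<longleftrightarrow> (\<exists>h. vanishing h \<and> (\<forall>y\<in>Ipi. F y = prim h y))"

lemma vanishing_prim_prim: "vanishing h \<Longrightarrow> vanishing_prim (prim h)"
  unfolding vanishing_prim_def by auto

lemma vanishing_prim_cong: "vanishing_prim F \<Longrightarrow> (\<And>y. y \<in> Ipi \<Longrightarrow> F y = G y) \<Longrightarrow> vanishing_prim G"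
  unfolding vanishing_prim_def by auto

lemma vanishing_primD:
  assumes "vanishing_prim F" shows "continuous_on Ipi F" "F 0 = 0"
proof -
  obtain h where h: "vanishing h" "\<And>y. y \<in> Ipi \<Longrightarrow> F y = prim h y"
    using assms vanishing_prim_def by auto
  have "continuous_on Ipi (prim h)" using h continuous_on_prim vanishing_def by auto
  then show "continuous_on Ipi F" using h(2) continuous_on_cong by (metis (mono_tags, lifting))
  show "F 0 = 0" using h(2)[of 0] by simp
qed

lemma vanishing_prim_lincomb:
  assumes "vanishing_prim F" "vanishing_prim G"
  shows "vanishing_prim (\<lambda>y. c * F y + d * G y)"
proof -
  obtain f g where f: "vanishing f" "\<forall>y\<in>Ipi. F y = prim f y" and g: "vanishing g" "\<forall>y\<in>Ipi. G y = prim g y"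
    using assms unfolding vanishing_prim_def by auto
  have "vanishing (\<lambda>t. c * f t + d * g t)"
    using f g unfolding vanishing_def by (auto intro!: continuous_intros)
  moreover have "\<forall>y\<in>Ipi. c * F y + d * G y = prim (\<lambda>t. c * f t + d * g t) y"
    using f g prim_lincomb vanishing_def by auto
  ultimately show ?thesis unfolding vanishing_prim_def by blast
qed

lemma tendsto_csc_mult_vanishing_prim:
  assumes "vanishing_prim F"
  shows "((\<lambda>t. csc t * F t) \<longlongrightarrow> 0) (at 0)"
proof -
  obtain h where h: "vanishing h" "\<And>y. y \<in> Ipi \<Longrightarrow> F y = prim h y"
    using assms vanishing_prim_def by auto
  have "(prim h has_real_derivative 0) (at 0)"
    using has_real_derivative_prim[of h 0] h(1) by (simp add: vanishing_def)
  then have "((\<lambda>t. prim h t / t) \<longlongrightarrow> 0) (at 0)"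
    unfolding DERIV_def by simp
  moreover have "((\<lambda>t::real. sin t / t) \<longlongrightarrow> 1) (at 0)"
    using DERIV_sin[of 0, unfolded DERIV_def] by simp
  ultimately have lim: "((\<lambda>t. (prim h t / t) / (sin t / t)) \<longlongrightarrow> 0) (at 0)"
    using tendsto_divide by fastforce
  have "\<forall>\<^sub>F t in at 0. t \<in> Ipi \<and> t \<noteq> 0"
    by (intro eventually_conj eventually_at_in_open') (auto simp: eventually_at_filter)
  then have "\<forall>\<^sub>F t in at 0. (prim h t / t) / (sin t / t) = csc t * F t"
    by eventually_elim (auto simp: h(2) csc_def sin_eq_0_Ipi)
  then show ?thesis by (rule Lim_transform_eventually[OF lim])
qed

lemma vanishing_csc_mult:
  assumes F: "vanishing_prim F" shows "vanishing (\<lambda>t. csc t * F t)"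
proof -
  have cF: "continuous_on Ipi F" and F0: "F 0 = 0" using vanishing_primD[OF F] by auto
  have "continuous (at t within Ipi) (\<lambda>t. csc t * F t)" if t: "t \<in> Ipi" for t
  proof (cases "t = 0")
    case True
    have "((\<lambda>t. csc t * F t) \<longlongrightarrow> 0) (at 0 within Ipi)"
      by (rule tendsto_within_subset[OF tendsto_csc_mult_vanishing_prim[OF F]]) simp
    then show ?thesis using True F0 by (simp add: continuous_within)
  next
    case False
    then have "sin t \<noteq> 0" using sin_eq_0_Ipi[OF t] by simp
    moreover have "continuous (at t within Ipi) F"
      using cF t continuous_on_eq_continuous_within by blast
    ultimately show ?thesis unfolding csc_def by (intro continuous_intros)
  qed
  then show ?thesis unfolding vanishing_def using F0
    by (simp add: continuous_on_eq_continuous_within csc_def)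
qed

lemma vanishing_cot_mult:
  assumes "vanishing_prim F" shows "vanishing (\<lambda>t. cot t * F t)"
proof -
  have "vanishing (\<lambda>t. cos t * (csc t * F t))"
    using vanishing_csc_mult[OF assms] unfolding vanishing_def by (auto intro!: continuous_intros)
  moreover have "(\<lambda>t. cos t * (csc t * F t)) = (\<lambda>t. cot t * F t)"
    by (auto simp: cot_def csc_def fun_eq_iff)
  ultimately show ?thesis by simp
qed

lemma vanishing_tan_mult: "vanishing_prim F \<Longrightarrow> vanishing (\<lambda>t. tan t * F t)"
  using vanishing_primD continuous_on_tan_Ipi unfolding vanishing_def by (auto intro!: continuous_intros)

lemma vanishing_sec_mult: "vanishing h \<Longrightarrow> vanishing (\<lambda>t. sec t * h t)"
  using continuous_on_sec_Ipi unfolding vanishing_def by (auto intro!: continuous_intros)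

fun cot_prim_iter :: "nat \<Rightarrow> (real \<Rightarrow> real) \<Rightarrow> real \<Rightarrow> real" where
  "cot_prim_iter 0 F = F"
| "cot_prim_iter (Suc k) F = prim (\<lambda>t. cot t * cot_prim_iter k F t)"

lemma vanishing_prim_cot_prim_iter: "vanishing_prim F \<Longrightarrow> vanishing_prim (cot_prim_iter k F)"
  by (induction k) (auto intro!: vanishing_prim_prim vanishing_cot_mult)

lemma cot_prim_iter_cong:
  "(\<And>y. y \<in> Ipi \<Longrightarrow> F y = G y) \<Longrightarrow> y \<in> Ipi \<Longrightarrow> cot_prim_iter k F y = cot_prim_iter k G y"
  by (induction k arbitrary: y) (auto intro!: prim_cong)

lemma cot_prim_iter_sum_list:
  assumes F: "\<And>x. x \<in> set xs \<Longrightarrow> vanishing_prim (F x)" and y: "y \<in> Ipi"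
  shows "cot_prim_iter k (\<lambda>y. \<Sum>x\<leftarrow>xs. c x * F x y) y = (\<Sum>x\<leftarrow>xs. c x * cot_prim_iter k (F x) y)"
  using y
proof (induction k arbitrary: y)
  case (Suc k)
  have cont: "continuous_on Ipi (\<lambda>t. cot t * cot_prim_iter k (F x) t)" if "x \<in> set xs" for x
    using vanishing_cot_mult[OF vanishing_prim_cot_prim_iter[OF F[OF that]]] vanishing_def by blast
  have "cot_prim_iter (Suc k) (\<lambda>y. \<Sum>x\<leftarrow>xs. c x * F x y) y
      = prim (\<lambda>t. \<Sum>x\<leftarrow>xs. c x * (cot t * cot_prim_iter k (F x) t)) y"
    using Suc by (auto intro!: prim_cong simp: sum_list_const_mult[symmetric] algebra_simps)
  also have "\<dots> = (\<Sum>x\<leftarrow>xs. c x * cot_prim_iter (Suc k) (F x) y)"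
    using prim_sum_list[OF cont Suc.prems] by simp
  finally show ?case .
qed simp

section \<open>Densities of words\<close>

lemma forms_Fun_Cons:
  "forms (Fun g # w) = (case forms w of [] \<Rightarrow> [] | f # fs \<Rightarrow> (\<lambda>t. g t * f t) # fs)"
proof (induction w arbitrary: g)
  case (Cons l w)
  then show ?case
    by (cases l) (auto simp: mult.assoc split: list.split)
qed simp

lemma forms_map_Form_append: "forms (map Form fs @ w) = fs @ forms w"
  by (induction fs) auto

lemma iter_int_replicate_cot: "iter_int (replicate k cot @ gs) = cot_prim_iter k (iter_int gs)"
  by (induction k) (auto simp: iter_int_Cons_prim)

definition word_density :: "letter list \<Rightarrow> real \<Rightarrow> real" where
  "word_density w t = hd (forms w) t * iter_int (tl (forms w)) t"

lemma iter_int_forms: "forms w \<noteq> [] \<Longrightarrow> iter_int (forms w) = prim (word_density w)"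
  unfolding word_density_def by (cases "forms w") (auto simp: iter_int_Cons_prim)

lemma iter_int_forms_Fun:
  "forms w \<noteq> [] \<Longrightarrow> iter_int (forms (Fun g # w)) = prim (\<lambda>t. g t * word_density w t)"
  unfolding word_density_def forms_Fun_Cons
  by (cases "forms w") (auto simp: iter_int_Cons_prim mult.assoc)

definition regular_word :: "letter list \<Rightarrow> bool" where
  "regular_word w \<longleftrightarrow> forms w \<noteq> [] \<and> vanishing (word_density w)"

lemma word_density_tan_cot:
  "word_density (Form tan # replicate k (Form cot) @ v) t = tan t * cot_prim_iter k (iter_int (forms v)) t"
proof -
  have "forms (Form tan # replicate k (Form cot) @ v) = tan # replicate k cot @ forms v"
    using forms_map_Form_append[of "tan # replicate k cot" v] by (simp add: map_replicate)
  then show ?thesis by (simp add: word_density_def iter_int_replicate_cot)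
qed

lemma regular_word_tan_cot:
  "vanishing_prim (iter_int (forms v)) \<Longrightarrow> regular_word (Form tan # replicate k (Form cot) @ v)"
  unfolding regular_word_def word_density_tan_cot
  by (auto intro!: vanishing_tan_mult vanishing_prim_cot_prim_iter)

definition lword_tan_density :: "lword \<Rightarrow> (real \<Rightarrow> real) \<Rightarrow> bool" where
  "lword_tan_density B S \<longleftrightarrow> (\<forall>x\<in>set B. regular_word (snd x))
     \<and> (\<forall>t\<in>Ipi. (\<Sum>x\<leftarrow>B. fst x * word_density (snd x) t) = tan t * S t)"

lemma sum_list_prim_word_density:
  assumes B: "lword_tan_density B S" and g: "continuous_on Ipi g" and y: "y \<in> Ipi"
  shows "(\<Sum>x\<leftarrow>B. fst x * prim (\<lambda>u. g u * word_density (snd x) u) y) = prim (\<lambda>u. g u * (tan u * S u)) y"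
proof -
  have "(\<Sum>x\<leftarrow>B. fst x * prim (\<lambda>u. g u * word_density (snd x) u) y)
      = prim (\<lambda>u. \<Sum>x\<leftarrow>B. fst x * (g u * word_density (snd x) u)) y"
    using B g unfolding lword_tan_density_def regular_word_def vanishing_def
    by (intro prim_sum_list[OF _ y, symmetric]) (auto intro!: continuous_intros)
  also have "\<dots> = prim (\<lambda>u. g u * (tan u * S u)) y"
  proof (rule prim_cong[OF _ y])
    fix u assume "u \<in> Ipi"
    moreover have "(\<Sum>x\<leftarrow>B. fst x * (g u * word_density (snd x) u))
        = g u * (\<Sum>x\<leftarrow>B. fst x * word_density (snd x) u)"
      by (induction B) (simp_all add: algebra_simps)
    ultimately show "(\<Sum>x\<leftarrow>B. fst x * (g u * word_density (snd x) u)) = g u * (tan u * S u)"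
      using B unfolding lword_tan_density_def by simp
  qed
  finally show ?thesis .
qed

lemma iter_int_lw_eq_sum_list: "iter_int_lw B y = (\<Sum>x\<leftarrow>B. fst x * iter_int (forms (snd x)) y)"
  unfolding iter_int_lw_def by (induction B) auto

lemma iter_int_lw_tan_density:
  assumes B: "lword_tan_density B S" and y: "y \<in> Ipi"
  shows "iter_int_lw B y = prim (\<lambda>u. tan u * S u) y"
proof -
  have "iter_int_lw B y = (\<Sum>x\<leftarrow>B. fst x * prim (\<lambda>u. 1 * word_density (snd x) u) y)"
    using B unfolding iter_int_lw_eq_sum_list lword_tan_density_def regular_word_def
    by (intro arg_cong[where f = sum_list] map_cong) (auto simp: iter_int_forms)
  then show ?thesis
    using sum_list_prim_word_density[OF B _ y, of "\<lambda>_. 1"] by simp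
qed

lemma vanishing_prim_iter_int_forms: "regular_word w \<Longrightarrow> vanishing_prim (iter_int (forms w))"
  unfolding regular_word_def by (simp add: iter_int_forms vanishing_prim_prim)

lemma vanishing_csc_prim_sec_word_density:
  "regular_word w \<Longrightarrow> vanishing (\<lambda>t. csc t * prim (\<lambda>u. sec u * word_density w u) t)"
  unfolding regular_word_def by (intro vanishing_csc_mult vanishing_prim_prim vanishing_sec_mult) simp

lemma iter_int_csc_sec_word:
  "regular_word w \<Longrightarrow>
     iter_int (forms (Form csc # Fun sec # w)) = prim (\<lambda>t. csc t * prim (\<lambda>u. sec u * word_density w u) t)"
  unfolding regular_word_def by (simp add: iter_int_Cons_prim iter_int_forms_Fun)

lemma vanishing_prim_iter_int_csc_sec_word:
  assumes "regular_word w" shows "vanishing_prim (iter_int (forms (Form csc # Fun sec # w)))"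
  unfolding iter_int_csc_sec_word[OF assms]
  by (rule vanishing_prim_prim[OF vanishing_csc_prim_sec_word_density[OF assms]])

lemma sum_list_iter_int_csc_sec:
  assumes B: "lword_tan_density B S" and y: "y \<in> Ipi"
  shows "(\<Sum>x\<leftarrow>B. fst x * iter_int (forms (Form csc # Fun sec # snd x)) y)
           = prim (\<lambda>t. csc t * prim (\<lambda>u. sec u * (tan u * S u)) t) y"
proof -
  have reg: "regular_word (snd x)" if "x \<in> set B" for x
    using B that unfolding lword_tan_density_def by auto
  have "(\<Sum>x\<leftarrow>B. fst x * iter_int (forms (Form csc # Fun sec # snd x)) y)
      = (\<Sum>x\<leftarrow>B. fst x * prim (\<lambda>t. csc t * prim (\<lambda>u. sec u * word_density (snd x) u) t) y)"
    using reg by (intro arg_cong[where f = sum_list] map_cong) (auto simp: iter_int_csc_sec_word simp del: forms.simps)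
  also have "\<dots> = prim (\<lambda>t. \<Sum>x\<leftarrow>B. fst x * (csc t * prim (\<lambda>u. sec u * word_density (snd x) u) t)) y"
    using reg vanishing_csc_prim_sec_word_density unfolding vanishing_def
    by (intro prim_sum_list[OF _ y, symmetric]) auto
  also have "\<dots> = prim (\<lambda>t. csc t * (\<Sum>x\<leftarrow>B. fst x * prim (\<lambda>u. sec u * word_density (snd x) u) t)) y"
    by (simp add: sum_list_const_mult[symmetric] mult.left_commute)
  also have "\<dots> = prim (\<lambda>t. csc t * prim (\<lambda>u. sec u * (tan u * S u)) t) y"
    by (intro prim_cong[OF _ y]) (simp add: sum_list_prim_word_density[OF B continuous_on_sec_Ipi])
  finally show ?thesis .
qed

lemma cat_p_Suc:
  "cat (p (Suc k)) B
     = map (\<lambda>x. (fst x, Form tan # replicate k (Form cot) @ snd x)) B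
       @ map (\<lambda>x. (- fst x, Form tan # replicate k (Form cot) @ Form csc # Fun sec # snd x)) B"
  by (simp add: cat_def p_def split: prod.split)

lemma continuous_on_a_sin: "continuous_on A (\<lambda>t. a n (sin t))"
  unfolding a_def by (cases "n = 0") (auto intro!: continuous_intros)

lemma lword_tan_density_W_Nil: "lword_tan_density (W [] n) (\<lambda>y. a n (sin y))"
proof -
  have "word_density [Fun (\<lambda>t. a n (sin t)), Form tan] = (\<lambda>t. tan t * a n (sin t))"
    by (simp add: word_density_def fun_eq_iff)
  moreover have "vanishing (\<lambda>t. tan t * a n (sin t))"
    unfolding vanishing_def using continuous_on_tan_Ipi continuous_on_a_sin
    by (auto intro!: continuous_intros)
  ultimately show ?thesis
    unfolding lword_tan_density_def regular_word_def W_def by simp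
qed

lemma sum_list_word_density_cat_p:
  "(\<Sum>x\<leftarrow>cat (p (Suc k)) B. fst x * word_density (snd x) t)
     = tan t * (\<Sum>x\<leftarrow>map (\<lambda>x. (fst x, iter_int (forms (snd x)))) B
                  @ map (\<lambda>x. (- fst x, iter_int (forms (Form csc # Fun sec # snd x)))) B.
                 fst x * cot_prim_iter k (snd x) t)"
proof -
  define \<Phi> where "\<Phi> w = iter_int (forms (Form csc # Fun sec # w))" for w
  have "(\<Sum>x\<leftarrow>B'. fst x * word_density (Form tan # replicate k (Form cot) @ snd x) t)
      = tan t * (\<Sum>x\<leftarrow>B'. fst x * cot_prim_iter k (iter_int (forms (snd x))) t)" for B' :: lword
    by (induction B') (simp_all add: word_density_tan_cot algebra_simps)
  moreover have "(\<Sum>x\<leftarrow>B'. - (fst x * word_density (Form tan # replicate k (Form cot) @ Form csc # Fun sec # snd x) t))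
      = tan t * (\<Sum>x\<leftarrow>B'. - (fst x * cot_prim_iter k (\<Phi> (snd x)) t))" for B' :: lword
    by (induction B')
      (simp_all add: \<Phi>_def word_density_tan_cot algebra_simps del: forms.simps iter_int.simps)
  ultimately show ?thesis
    unfolding cat_p_Suc \<Phi>_def[symmetric] by (simp add: o_def distrib_left)
qed

lemma lword_tan_density_cat_p:
  assumes B: "lword_tan_density B S"
    and S': "\<And>y. y \<in> Ipi \<Longrightarrow> cot_prim_iter k (\<lambda>y. prim (\<lambda>t. tan t * S t) y
               - prim (\<lambda>t. csc t * prim (\<lambda>u. sec u * (tan u * S u)) t) y) y = S' y"
  shows "lword_tan_density (cat (p (Suc k)) B) S'"
proof -
  define \<Phi> where "\<Phi> w = iter_int (forms (Form csc # Fun sec # w))" for w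
  define L where "L = map (\<lambda>x. (fst x, iter_int (forms (snd x)))) B @ map (\<lambda>x. (- fst x, \<Phi> (snd x))) B"
  have reg: "regular_word (snd x)" if "x \<in> set B" for x
    using B that unfolding lword_tan_density_def by auto
  have density: "(\<Sum>x\<leftarrow>cat (p (Suc k)) B. fst x * word_density (snd x) t)
      = tan t * (\<Sum>x\<leftarrow>L. fst x * cot_prim_iter k (snd x) t)" for t
    unfolding L_def \<Phi>_def by (rule sum_list_word_density_cat_p)
  have sum_L: "(\<Sum>x\<leftarrow>L. fst x * snd x y)
      = prim (\<lambda>t. tan t * S t) y - prim (\<lambda>t. csc t * prim (\<lambda>u. sec u * (tan u * S u)) t) y"
    if y: "y \<in> Ipi" for y
  proof -
    have "(\<Sum>x\<leftarrow>L. fst x * snd x y)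
        = (\<Sum>x\<leftarrow>B. fst x * iter_int (forms (snd x)) y) + (\<Sum>x\<leftarrow>B. - (fst x * \<Phi> (snd x) y))"
      unfolding L_def by (simp add: o_def)
    also have "(\<Sum>x\<leftarrow>B. - (fst x * \<Phi> (snd x) y)) = - (\<Sum>x\<leftarrow>B. fst x * \<Phi> (snd x) y)"
      by (induction B) simp_all
    finally show ?thesis
      using iter_int_lw_tan_density[OF B y] sum_list_iter_int_csc_sec[OF B y]
      unfolding iter_int_lw_eq_sum_list \<Phi>_def by linarith
  qed
  show ?thesis
    unfolding lword_tan_density_def
  proof (intro conjI ballI)
    fix x assume "x \<in> set (cat (p (Suc k)) B)"
    then show "regular_word (snd x)"
      using reg unfolding cat_p_Suc
      by (auto intro!: regular_word_tan_cot vanishing_prim_iter_int_forms vanishing_prim_iter_int_csc_sec_word)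
  next
    fix t assume t: "t \<in> Ipi"
    have "vanishing_prim (snd x)" if "x \<in> set L" for x
      using that reg unfolding L_def \<Phi>_def
      by (auto intro!: vanishing_prim_iter_int_forms vanishing_prim_iter_int_csc_sec_word simp del: forms.simps)
    then have "(\<Sum>x\<leftarrow>L. fst x * cot_prim_iter k (snd x) t) = cot_prim_iter k (\<lambda>y. \<Sum>x\<leftarrow>L. fst x * snd x y) t"
      by (rule cot_prim_iter_sum_list[OF _ t, symmetric])
    also have "\<dots> = cot_prim_iter k (\<lambda>y. prim (\<lambda>t. tan t * S t) y
        - prim (\<lambda>t. csc t * prim (\<lambda>u. sec u * (tan u * S u)) t) y) t"
      by (rule cot_prim_iter_cong[OF sum_L t])
    also have "\<dots> = S' t"
      by (rule S'[OF t])
    finally show "(\<Sum>x\<leftarrow>cat (p (Suc k)) B. fst x * word_density (snd x) t) = tan t * S' t"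
      by (simp add: density)
  qed
qed

section \<open>Central binomial coefficients and power series on the unit disc\<close>

definition central_coeff :: "nat \<Rightarrow> real" where
  "central_coeff m = real (2*m choose m) / 4 ^ m"

lemma a_eq_central_coeff: "a m x = central_coeff m * (x^2)^m"
  by (simp add: a_def central_coeff_def power_mult)

lemma central_coeff_0 [simp]: "central_coeff 0 = 1"
  by (simp add: central_coeff_def)

lemma central_coeff_nonneg: "central_coeff m \<ge> 0"
  by (simp add: central_coeff_def)

lemma central_coeff_Suc: "central_coeff (Suc m) * (2 * real (Suc m)) = central_coeff m * (2 * real m + 1)"
proof -
  have fact_eq: "central_coeff m = fact (2*m) / (fact m ^ 2 * 4 ^ m)" for m
    unfolding central_coeff_def by (simp add: binomial_fact power2_eq_square mult_2)
  have f2: "fact (2 * Suc m) = (2 * real m + 2) * (2 * real m + 1) * fact (2 * m)"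
    by (simp add: algebra_simps)
  have f1: "fact (Suc m) = (real m + 1) * (fact m :: real)"
    by (simp add: algebra_simps)
  show ?thesis
    unfolding fact_eq f2 f1 by (simp add: divide_simps) (simp add: algebra_simps power2_eq_square)
qed


lemma central_coeff_sq_le: "central_coeff m ^ 2 * (2 * real m + 1) \<le> 1"
proof (induction m)
  case (Suc m)
  define q where "q = (2 * real m + 1) * (2 * real m + 3) / (2 * real m + 2)^2"
  have q1: "q \<le> 1"
  proof -
    have "(2 * real m + 1) * (2 * real m + 3) \<le> (2 * real m + 2)^2"
      by (simp add: power2_eq_square algebra_simps)
    then show ?thesis unfolding q_def by simp
  qed
  have "central_coeff (Suc m) = central_coeff m * (2 * real m + 1) / (2 * real m + 2)"
    using central_coeff_Suc[of m] by (simp add: eq_divide_eq algebra_simps)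
  then have "central_coeff (Suc m) ^ 2 * (2 * real (Suc m) + 1) = (central_coeff m ^ 2 * (2 * real m + 1)) * q"
    unfolding q_def by (simp only:) (simp add: power2_eq_square field_simps)
  also have "\<dots> \<le> 1 * 1"
    by (rule mult_mono) (use Suc q1 in \<open>auto simp: q_def\<close>)
  finally show ?case by simp
qed simp

lemma central_coeff_le_1: "central_coeff m \<le> 1"
proof -
  have "central_coeff m ^ 2 * 1 \<le> central_coeff m ^ 2 * (2 * real m + 1)"
    by (intro mult_left_mono) auto
  then have "central_coeff m ^ 2 \<le> 1 ^ 2"
    using central_coeff_sq_le[of m] by simp
  then show ?thesis by (rule power2_le_imp_le) simp
qed

lemma central_coeff_le_powr: "1 \<le> m \<Longrightarrow> central_coeff m \<le> real m powr (-1/2)"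
proof -
  assume m: "1 \<le> m"
  have "(real m powr (-1/2))^2 = real m powr (of_nat 2 * (-1/2))"
    using m by (intro powr_power) simp
  also have "\<dots> = 1 / real m"
    using m by (simp add: powr_minus_divide)
  finally have "(real m powr (-1/2))^2 = 1 / real m" .
  moreover have "central_coeff m ^ 2 \<le> 1 / (2 * real m + 1)"
    using central_coeff_sq_le[of m] by (simp add: pos_le_divide_eq)
  moreover have "1 / (2 * real m + 1) \<le> 1 / real m"
    using m by (intro divide_left_mono) auto
  ultimately have "central_coeff m ^ 2 \<le> (real m powr (-1/2))^2" by simp
  then show ?thesis by (rule power2_le_imp_le) simp
qed

lemma a_nonneg: "0 \<le> a m x"
  by (simp add: a_eq_central_coeff central_coeff_nonneg)

lemma a_sin_le_central_coeff: "a m (sin y) \<le> central_coeff m"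
proof -
  have "(sin y ^ 2) ^ m \<le> 1"
    by (rule power_le_one) (auto simp: sin_squared_eq abs_square_le_1)
  then show ?thesis
    unfolding a_eq_central_coeff using mult_left_le central_coeff_nonneg by auto
qed

definition conv_unit_disc :: "(nat \<Rightarrow> real) \<Rightarrow> bool" where
  "conv_unit_disc e \<longleftrightarrow> (\<forall>r::real. 0 \<le> r \<longrightarrow> r < 1 \<longrightarrow> summable (\<lambda>m. \<bar>e m\<bar> * r^m))"

definition pseries :: "(nat \<Rightarrow> real) \<Rightarrow> real \<Rightarrow> real" where
  "pseries e u = (\<Sum>m. e m * u^m)"

lemma summable_conv_unit_disc:
  assumes "conv_unit_disc e" "\<bar>z\<bar> < 1" shows "summable (\<lambda>m. e m * z^m)"
proof -
  have "summable (\<lambda>m. \<bar>e m\<bar> * \<bar>z\<bar>^m)" using assms unfolding conv_unit_disc_def by auto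
  then have "summable (\<lambda>m. \<bar>e m * z^m\<bar>)" by (simp add: abs_mult power_abs)
  then show ?thesis by (rule summable_rabs_cancel)
qed

lemma conv_unit_disc_le:
  assumes "conv_unit_disc e" "0 \<le> C" "\<And>m. \<bar>e' m\<bar> \<le> C * \<bar>e m\<bar>" shows "conv_unit_disc e'"
  unfolding conv_unit_disc_def
proof (intro allI impI)
  fix r :: real assume r: "0 \<le> r" "r < 1"
  have "summable (\<lambda>m. C * (\<bar>e m\<bar> * r^m))"
    using assms(1) r unfolding conv_unit_disc_def by (intro summable_mult) auto
  then show "summable (\<lambda>m. \<bar>e' m\<bar> * r^m)"
    by (rule summable_comparison_test')
      (use assms(3) r in \<open>auto intro!: mult_right_mono simp: mult.assoc[symmetric]\<close>)
qed

lemma conv_unit_disc_diffs: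
  assumes "conv_unit_disc e" shows "conv_unit_disc (diffs e)"
  unfolding conv_unit_disc_def
proof (intro allI impI)
  fix r :: real assume r: "0 \<le> r" "r < 1"
  have "conv_unit_disc (\<lambda>m. \<bar>e m\<bar>)" using assms by (simp add: conv_unit_disc_def)
  then have "summable (\<lambda>m. diffs (\<lambda>m. \<bar>e m\<bar>) m * r^m)"
    by (intro termdiff_converges[of r 1]) (use r summable_conv_unit_disc in auto)
  moreover have "diffs (\<lambda>m. \<bar>e m\<bar>) m = \<bar>diffs e m\<bar>" for m
    by (simp add: diffs_def abs_mult)
  ultimately show "summable (\<lambda>m. \<bar>diffs e m\<bar> * r^m)" by simp
qed

lemma conv_unit_disc_linear_bound:
  assumes "\<And>m. \<bar>e m\<bar> \<le> M * (real m + 1)" shows "conv_unit_disc e"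
proof (rule conv_unit_disc_le)
  show "conv_unit_disc (diffs (\<lambda>m. 1))"
    by (rule conv_unit_disc_diffs) (auto simp: conv_unit_disc_def intro!: summable_geometric)
  show "0 \<le> M" using assms[of 0] by simp
  show "\<bar>e m\<bar> \<le> M * \<bar>diffs (\<lambda>m. 1) m\<bar>" for m
    using assms[of m] by (simp add: diffs_def add_ac)
qed

lemma pseries_sums: "conv_unit_disc e \<Longrightarrow> \<bar>u\<bar> < 1 \<Longrightarrow> (\<lambda>m. e m * u^m) sums pseries e u"
  unfolding pseries_def by (intro summable_sums summable_conv_unit_disc)

lemma has_real_derivative_pseries:
  assumes "conv_unit_disc e" "\<bar>u\<bar> < 1"
  shows "(pseries e has_real_derivative pseries (diffs e) u) (at u)"
  unfolding pseries_def[abs_def]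
  by (rule termdiffs_strong'[of 1]) (use assms summable_conv_unit_disc in auto)

lemma pseries_0: "pseries e 0 = e 0"
  unfolding pseries_def by simp

lemma sums_index_mult_pseries:
  assumes "conv_unit_disc e" "\<bar>u\<bar> < 1"
  shows "(\<lambda>m. real m * e m * u^m) sums (u * pseries (diffs e) u)"
proof -
  have "(\<lambda>j. diffs e j * u^j * u) sums (pseries (diffs e) u * u)"
    by (intro sums_mult2 pseries_sums conv_unit_disc_diffs assms)
  then have "(\<lambda>j. real (Suc j) * e (Suc j) * u^(Suc j)) sums (u * pseries (diffs e) u)"
    by (simp add: diffs_def algebra_simps)
  then show ?thesis using sums_Suc_iff[where f="\<lambda>m. real m * e m * u^m"] by simp
qed

lemma continuous_on_pseries_closed:
  assumes "summable (\<lambda>m. \<bar>e m\<bar>)"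
  shows "continuous_on {-1..1} (pseries e)"
proof -
  have lim: "uniform_limit {-1..1} (\<lambda>N x. \<Sum>i<N. e i * x^i) (\<lambda>x. \<Sum>i. e i * x^i) sequentially"
  proof (rule Weierstrass_m_test[OF _ assms])
    fix i and x :: real assume "x \<in> {-1..1}"
    then have "\<bar>x\<bar>^i \<le> 1" by (intro power_le_one) auto
    then show "norm (e i * x^i) \<le> \<bar>e i\<bar>" by (simp add: abs_mult power_abs mult_left_le)
  qed
  show ?thesis
    unfolding pseries_def[abs_def]
    by (rule uniform_limit_theorem[OF _ lim]) (auto intro!: always_eventually continuous_intros)
qed

text \<open>Coefficientwise this is \<open>central_coeff_Suc\<close> together with \<open>P (Suc m) = P m + c m\<close>.\<close>

lemma pseries_central_ode:
  fixes c :: "nat \<Rightarrow> real"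
  defines "P \<equiv> \<lambda>m. \<Sum>k<m. c k"
  defines "\<sigma> \<equiv> \<lambda>m. c m * central_coeff m"
  defines "\<nu> \<equiv> \<lambda>m. P m * central_coeff m"
  assumes \<sigma>: "conv_unit_disc \<sigma>" and \<nu>: "conv_unit_disc \<nu>" and u: "\<bar>u\<bar> < 1"
  shows "2 * (1 - u) * pseries (diffs \<nu>) u = pseries \<sigma> u + pseries \<nu> u + 2 * u * pseries (diffs \<sigma>) u"
proof -
  have coeff: "2 * diffs \<nu> j - 2 * real j * \<nu> j - \<sigma> j - \<nu> j - 2 * real j * \<sigma> j = 0" for j
  proof -
    have "2 * diffs \<nu> j = (central_coeff (Suc j) * (2 * real (Suc j))) * P (Suc j)"
      unfolding diffs_def \<nu>_def by (simp add: algebra_simps)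
    also have "\<dots> = central_coeff j * (2 * real j + 1) * (P j + c j)"
      by (simp only: central_coeff_Suc) (simp add: P_def)
    finally show ?thesis unfolding \<nu>_def \<sigma>_def by (simp add: algebra_simps)
  qed
  have "(\<lambda>j. 2 * (diffs \<nu> j * u^j) - 2 * (real j * \<nu> j * u^j) - \<sigma> j * u^j - \<nu> j * u^j - 2 * (real j * \<sigma> j * u^j))
     sums (2 * pseries (diffs \<nu>) u - 2 * (u * pseries (diffs \<nu>) u) - pseries \<sigma> u - pseries \<nu> u
           - 2 * (u * pseries (diffs \<sigma>) u))"
    by (intro sums_diff sums_mult pseries_sums sums_index_mult_pseries conv_unit_disc_diffs \<sigma> \<nu> u)
  moreover have "2 * (diffs \<nu> j * u^j) - 2 * (real j * \<nu> j * u^j) - \<sigma> j * u^j - \<nu> j * u^j - 2 * (real j * \<sigma> j * u^j) = 0" for j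
    using arg_cong[OF coeff[of j], of "\<lambda>x. x * u^j"] by (simp add: algebra_simps)
  ultimately have "(\<lambda>j. 0) sums (2 * pseries (diffs \<nu>) u - 2 * (u * pseries (diffs \<nu>) u) - pseries \<sigma> u
      - pseries \<nu> u - 2 * (u * pseries (diffs \<sigma>) u))"
    by simp
  then have "2 * pseries (diffs \<nu>) u - 2 * (u * pseries (diffs \<nu>) u) - pseries \<sigma> u
      - pseries \<nu> u - 2 * (u * pseries (diffs \<sigma>) u) = 0"
    using sums_zero sums_unique2 by blast
  then show ?thesis by (simp add: algebra_simps)
qed

section \<open>Series in \<open>a m (sin y)\<close>\<close>

definition a_series :: "(nat \<Rightarrow> real) \<Rightarrow> real \<Rightarrow> real" where
  "a_series c y = pseries (\<lambda>m. c m * central_coeff m) (sin y ^ 2)"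

lemma a_series_eq_suminf: "a_series c y = (\<Sum>m. c m * a m (sin y))"
  unfolding a_series_def pseries_def a_eq_central_coeff by (simp add: mult.assoc)

lemma a_series_0: "a_series c 0 = c 0"
  by (simp add: a_series_def pseries_0)

lemma abs_sin_sq_less_1:
  assumes "y \<in> Ipi" shows "\<bar>sin y ^ 2\<bar> < 1"
proof -
  have "0 < cos y ^ 2" using cos_gt_zero_Ipi[OF assms] by simp
  then have "sin y ^ 2 < 1" using sin_cos_squared_add[of y] by linarith
  then show ?thesis by simp
qed

lemma has_real_derivative_a_series:
  assumes "conv_unit_disc (\<lambda>m. c m * central_coeff m)" and y: "y \<in> Ipi"
  shows "(a_series c has_real_derivative
           2 * sin y * cos y * pseries (diffs (\<lambda>m. c m * central_coeff m)) (sin y ^ 2)) (at y)"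
proof -
  have sin_sq: "((\<lambda>y. sin y ^ 2) has_real_derivative 2 * sin y * cos y) (at y)"
    by (auto intro!: derivative_eq_intros simp: power2_eq_square)
  have "((\<lambda>y. pseries (\<lambda>m. c m * central_coeff m) (sin y ^ 2)) has_real_derivative
      pseries (diffs (\<lambda>m. c m * central_coeff m)) (sin y ^ 2) * (2 * sin y * cos y)) (at y)"
    by (rule DERIV_chain2[OF has_real_derivative_pseries[OF assms(1) abs_sin_sq_less_1[OF y]] sin_sq])
  then show ?thesis unfolding a_series_def[abs_def] by (simp add: algebra_simps)
qed

lemma continuous_on_a_series:
  "conv_unit_disc (\<lambda>m. c m * central_coeff m) \<Longrightarrow> continuous_on Ipi (a_series c)"
  by (rule continuous_at_imp_continuous_on) (use has_real_derivative_a_series DERIV_isCont in blast)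

lemma conv_unit_disc_div_index:
  assumes "conv_unit_disc (\<lambda>m. d m * central_coeff m)"
  shows "conv_unit_disc (\<lambda>m. d m / (2 * real m) ^ k * central_coeff m)"
proof (rule conv_unit_disc_le[OF assms])
  show "\<bar>d m / (2 * real m) ^ k * central_coeff m\<bar> \<le> 1 * \<bar>d m * central_coeff m\<bar>" for m
  proof (cases "m = 0")
    case False
    then have "1 \<le> (2 * real m) ^ k" by (intro one_le_power) simp
    then have "\<bar>d m\<bar> / (2 * real m) ^ k \<le> \<bar>d m\<bar>"
      by (simp add: divide_le_eq mult_le_cancel_left1)
    then have "\<bar>d m\<bar> / (2 * real m) ^ k * \<bar>central_coeff m\<bar> \<le> \<bar>d m\<bar> * \<bar>central_coeff m\<bar>"
      by (rule mult_right_mono) simp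
    then show ?thesis by (simp add: abs_mult)
  qed (cases k; simp)
qed simp

lemma has_real_derivative_a_series_div:
  assumes conv: "conv_unit_disc (\<lambda>m. d m * central_coeff m)" and d0: "d 0 = 0" and y: "y \<in> Ipi"
  shows "(a_series (\<lambda>m. d m / (2 * real m)) has_real_derivative cot y * a_series d y) (at y)"
proof -
  define e where "e = (\<lambda>m. d m / (2 * real m) * central_coeff m)"
  define u where "u = sin y ^ 2"
  have conv_e: "conv_unit_disc e"
    using conv_unit_disc_div_index[OF conv, of 1] unfolding e_def by simp
  have u: "\<bar>u\<bar> < 1" unfolding u_def by (rule abs_sin_sq_less_1[OF y])
  have "(\<lambda>j. 2 * u * (diffs e j * u^j)) sums (2 * u * pseries (diffs e) u)"
    by (intro sums_mult pseries_sums conv_unit_disc_diffs conv_e u)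
  moreover have "2 * u * (diffs e j * u^j) = d (Suc j) * central_coeff (Suc j) * u^(Suc j)" for j
    unfolding e_def diffs_def by (simp add: field_simps)
  ultimately have "(\<lambda>j. d (Suc j) * central_coeff (Suc j) * u^(Suc j)) sums (2 * u * pseries (diffs e) u)"
    by simp
  then have "(\<lambda>m. d m * central_coeff m * u^m) sums (2 * u * pseries (diffs e) u)"
    using sums_Suc_iff[where f="\<lambda>m. d m * central_coeff m * u^m"] d0 by simp
  then have d_eq: "a_series d y = 2 * u * pseries (diffs e) u"
    unfolding a_series_def pseries_def u_def[symmetric] by (simp add: sums_iff)
  have "(a_series (\<lambda>m. d m / (2 * real m)) has_real_derivative 2 * sin y * cos y * pseries (diffs e) u) (at y)"
    unfolding e_def u_def by (rule has_real_derivative_a_series[OF conv_e[unfolded e_def] y])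
  moreover have "2 * sin y * cos y * pseries (diffs e) u = cot y * a_series d y"
    by (cases "sin y = 0") (simp_all add: d_eq u_def cot_def field_simps power2_eq_square)
  ultimately show ?thesis by simp
qed

text \<open>The derivative of \<open>sin\<^sup>2 y / cos y * S y - cos y * V y\<close> with \<open>s = sin y\<close>, \<open>co = cos y\<close>,
  \<open>S' = 2 s co A\<close>, \<open>V' = 2 s co B\<close>; the differential equation of \<open>pseries_central_ode\<close>
  collapses it to \<open>sec y * tan y * S y\<close>.\<close>

lemma sec_tan_primitive_deriv_eq:
  fixes s co A B S V :: real
  assumes co: "co \<noteq> 0" and pyth: "co^2 + s^2 = 1" and ode: "2 * co^2 * B = S + V + 2 * s^2 * A"
  shows "((2 * s * co) * co - s^2 * (- s)) / (co * co) * S + (2 * s * co * A) * (s^2 / co)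
           - ((- s) * V + (2 * s * co * B) * co) = s / (co * co) * S"
proof -
  have "s * co^2 + s^3 = s"
    using arg_cong[OF pyth, of "(*) s"] by (simp add: power2_eq_square power3_eq_cube algebra_simps)
  then have e1: "((2 * s * co) * co - s^2 * (- s)) / (co * co) = s / (co * co) + s"
    using co by (simp add: field_simps power2_eq_square power3_eq_cube)
  have e2: "(2 * s * co * A) * (s^2 / co) = 2 * s^3 * A"
    using co by (simp add: power2_eq_square power3_eq_cube)
  have e3: "(2 * s * co * B) * co = s * (S + V + 2 * s^2 * A)"
    using arg_cong[OF ode, of "(*) s"] by (simp add: power2_eq_square algebra_simps)
  show ?thesis
    unfolding e1 e2 e3 by (simp add: algebra_simps power2_eq_square power3_eq_cube)
qed

lemma has_real_derivative_sec_tan_primitive: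
  fixes c :: "nat \<Rightarrow> real"
  defines "P \<equiv> \<lambda>m. \<Sum>k<m. c k"
  assumes conv_c: "conv_unit_disc (\<lambda>m. c m * central_coeff m)"
    and conv_P: "conv_unit_disc (\<lambda>m. P m * central_coeff m)" and y: "y \<in> Ipi"
  shows "((\<lambda>y. sin y ^ 2 / cos y * a_series c y - cos y * a_series P y)
           has_real_derivative sec y * (tan y * a_series c y)) (at y)"
proof -
  define s where "s = sin y"
  define co where "co = cos y"
  define A where "A = pseries (diffs (\<lambda>m. c m * central_coeff m)) (sin y ^ 2)"
  define B where "B = pseries (diffs (\<lambda>m. P m * central_coeff m)) (sin y ^ 2)"
  define S where "S = a_series c y"
  define V where "V = a_series P y"
  have co: "co \<noteq> 0" using cos_gt_zero_Ipi[OF y] by (simp add: co_def)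
  have dS: "(a_series c has_real_derivative 2 * s * co * A) (at y)"
    using has_real_derivative_a_series[OF conv_c y] unfolding s_def co_def A_def .
  have dV: "(a_series P has_real_derivative 2 * s * co * B) (at y)"
    using has_real_derivative_a_series[OF conv_P y] unfolding s_def co_def B_def .
  have "((\<lambda>y. sin y ^ 2) has_real_derivative 2 * s * co) (at y)"
    unfolding s_def co_def by (auto intro!: derivative_eq_intros simp: power2_eq_square)
  from DERIV_divide[OF this DERIV_cos[of y]]
  have "((\<lambda>y. sin y ^ 2 / cos y) has_real_derivative ((2 * s * co) * co - s^2 * (- s)) / (co * co)) (at y)"
    using co unfolding s_def co_def by simp
  from DERIV_diff[OF DERIV_mult[OF this dS] DERIV_mult[OF DERIV_cos[of y] dV]]
  have deriv: "((\<lambda>y. sin y ^ 2 / cos y * a_series c y - cos y * a_series P y) has_real_derivative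
      ((2 * s * co) * co - s^2 * (- s)) / (co * co) * S + (2 * s * co * A) * (s^2 / co)
        - ((- s) * V + (2 * s * co * B) * co)) (at y)"
    unfolding S_def V_def s_def co_def by simp
  have pyth: "co^2 + s^2 = 1" unfolding co_def s_def by simp
  have "2 * (1 - s^2) * B = S + V + 2 * s^2 * A"
    using pseries_central_ode[OF conv_c conv_P[unfolded P_def] abs_sin_sq_less_1[OF y]]
    unfolding A_def B_def S_def V_def a_series_def P_def s_def .
  moreover have "1 - s^2 = co^2" using pyth by simp
  ultimately have ode: "2 * co^2 * B = S + V + 2 * s^2 * A" by simp
  have "((2 * s * co) * co - s^2 * (- s)) / (co * co) * S + (2 * s * co * A) * (s^2 / co)
        - ((- s) * V + (2 * s * co * B) * co) = s / (co * co) * S"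
    by (rule sec_tan_primitive_deriv_eq[OF co pyth ode])
  also have "\<dots> = sec y * (tan y * a_series c y)"
    unfolding sec_def tan_def s_def co_def S_def by simp
  finally show ?thesis using deriv by simp
qed

lemma vanishing_tan_mult_a_series:
  "conv_unit_disc (\<lambda>m. c m * central_coeff m) \<Longrightarrow> vanishing (\<lambda>t. tan t * a_series c t)"
  unfolding vanishing_def using continuous_on_a_series continuous_on_tan_Ipi
  by (auto intro!: continuous_intros)

lemma prim_tan_sub_prim_csc_prim_sec:
  fixes c :: "nat \<Rightarrow> real"
  defines "P \<equiv> \<lambda>m. \<Sum>k<m. c k"
  assumes conv_c: "conv_unit_disc (\<lambda>m. c m * central_coeff m)"
    and conv_P: "conv_unit_disc (\<lambda>m. P m * central_coeff m)" and y: "y \<in> Ipi"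
  shows "prim (\<lambda>t. tan t * a_series c t) y - prim (\<lambda>t. csc t * prim (\<lambda>u. sec u * (tan u * a_series c u)) t) y
           = a_series (\<lambda>m. P m / (2 * real m)) y"
proof -
  define S where "S = a_series c"
  define V where "V = a_series P"
  have P0: "P 0 = 0" unfolding P_def by simp
  have tan_S: "vanishing (\<lambda>t. tan t * S t)"
    unfolding S_def by (rule vanishing_tan_mult_a_series[OF conv_c])
  have csc_eq: "csc t * prim (\<lambda>u. sec u * (tan u * S u)) t = tan t * S t - cot t * V t" if t: "t \<in> Ipi" for t
  proof -
    have "prim (\<lambda>u. sec u * (tan u * S u)) t
        = (sin t ^ 2 / cos t * S t - cos t * V t) - (sin 0 ^ 2 / cos 0 * S 0 - cos 0 * V 0)"
      using vanishing_sec_mult[OF tan_S] unfolding vanishing_def S_def V_def P_def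
      by (intro prim_eq_diff[OF _ _ t] has_real_derivative_sec_tan_primitive[OF conv_c conv_P[unfolded P_def]]) auto
    then have "prim (\<lambda>u. sec u * (tan u * S u)) t = sin t ^ 2 / cos t * S t - cos t * V t"
      by (simp add: V_def a_series_0 P0)
    then show ?thesis
      by (cases "sin t = 0") (simp_all add: csc_def tan_def cot_def field_simps power2_eq_square)
  qed
  have cont_csc: "continuous_on Ipi (\<lambda>t. csc t * prim (\<lambda>u. sec u * (tan u * S u)) t)"
    using vanishing_csc_mult[OF vanishing_prim_prim[OF vanishing_sec_mult[OF tan_S]]] vanishing_def by blast
  have cont_cot_V: "continuous_on Ipi (\<lambda>t. cot t * V t)"
  proof (rule continuous_on_eq)
    show "continuous_on Ipi (\<lambda>t. tan t * S t - csc t * prim (\<lambda>u. sec u * (tan u * S u)) t)"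
      using tan_S cont_csc unfolding vanishing_def by (intro continuous_on_diff) auto
  qed (simp add: csc_eq)
  have "prim (\<lambda>t. csc t * prim (\<lambda>u. sec u * (tan u * S u)) t) y
      = prim (\<lambda>t. 1 * (tan t * S t) + (-1) * (cot t * V t)) y"
    by (rule prim_cong[OF _ y]) (simp add: csc_eq)
  also have "\<dots> = 1 * prim (\<lambda>t. tan t * S t) y + (-1) * prim (\<lambda>t. cot t * V t) y"
    using tan_S cont_cot_V unfolding vanishing_def by (intro prim_lincomb[OF _ _ y]) auto
  also have "prim (\<lambda>t. cot t * V t) y = a_series (\<lambda>m. P m / (2 * real m)) y - a_series (\<lambda>m. P m / (2 * real m)) 0"
    unfolding V_def by (rule prim_eq_diff[OF cont_cot_V[unfolded V_def] has_real_derivative_a_series_div[OF conv_P P0] y])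
  finally show ?thesis by (simp add: S_def a_series_0 P0)
qed

lemma vanishing_prim_a_series_div:
  fixes c :: "nat \<Rightarrow> real"
  defines "P \<equiv> \<lambda>m. \<Sum>k<m. c k"
  assumes conv_c: "conv_unit_disc (\<lambda>m. c m * central_coeff m)"
    and conv_P: "conv_unit_disc (\<lambda>m. P m * central_coeff m)"
  shows "vanishing_prim (a_series (\<lambda>m. P m / (2 * real m)))"
proof (rule vanishing_prim_cong)
  show "vanishing_prim (\<lambda>y. 1 * prim (\<lambda>t. tan t * a_series c t) y
      + (-1) * prim (\<lambda>t. csc t * prim (\<lambda>u. sec u * (tan u * a_series c u)) t) y)"
    by (intro vanishing_prim_lincomb vanishing_prim_prim vanishing_csc_mult vanishing_sec_mult
        vanishing_tan_mult_a_series[OF conv_c])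
  show "1 * prim (\<lambda>t. tan t * a_series c t) y
      + (-1) * prim (\<lambda>t. csc t * prim (\<lambda>u. sec u * (tan u * a_series c u)) t) y
      = a_series (\<lambda>m. P m / (2 * real m)) y" if "y \<in> Ipi" for y
    using prim_tan_sub_prim_csc_prim_sec[OF conv_c conv_P[unfolded P_def] that] by (simp add: P_def)
qed

lemma cot_prim_iter_a_series_div:
  assumes conv: "conv_unit_disc (\<lambda>m. d m * central_coeff m)" and d0: "d 0 = 0"
    and U: "vanishing_prim (a_series (\<lambda>m. d m / (2 * real m)))" and y: "y \<in> Ipi"
  shows "cot_prim_iter k (a_series (\<lambda>m. d m / (2 * real m))) y = a_series (\<lambda>m. d m / (2 * real m) ^ Suc k) y"
  using y
proof (induction k arbitrary: y)
  case (Suc k)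
  define D where "D = (\<lambda>m. d m / (2 * real m) ^ Suc k)"
  have conv_D: "conv_unit_disc (\<lambda>m. D m * central_coeff m)"
    unfolding D_def by (rule conv_unit_disc_div_index[OF conv])
  have D0: "D 0 = 0" by (simp add: D_def d0)
  have "continuous_on Ipi (\<lambda>t. cot t * cot_prim_iter k (a_series (\<lambda>m. d m / (2 * real m))) t)"
    using vanishing_cot_mult[OF vanishing_prim_cot_prim_iter[OF U]] vanishing_def by blast
  then have cont: "continuous_on Ipi (\<lambda>t. cot t * a_series D t)"
    by (rule continuous_on_eq) (simp add: Suc.IH D_def)
  have "cot_prim_iter (Suc k) (a_series (\<lambda>m. d m / (2 * real m))) y = prim (\<lambda>t. cot t * a_series D t) y"
    by (simp, rule prim_cong[OF _ Suc.prems]) (simp add: Suc.IH D_def)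
  also have "\<dots> = a_series (\<lambda>m. D m / (2 * real m)) y - a_series (\<lambda>m. D m / (2 * real m)) 0"
    by (rule prim_eq_diff[OF cont has_real_derivative_a_series_div[OF conv_D D0] Suc.prems])
  also have "(\<lambda>m. D m / (2 * real m)) = (\<lambda>m. d m / (2 * real m) ^ Suc (Suc k))"
    by (simp add: D_def fun_eq_iff mult.commute)
  finally show ?case by (simp add: a_series_0)
qed simp

section \<open>Chain coefficients\<close>

text \<open>\<open>chain_coeff n s m\<close> is the sum of \<open>\<Prod>\<^sub>i 1 / (2 n\<^sub>i) ^ s\<^sub>i\<close> over the chains
  \<open>m = n\<^sub>1 > n\<^sub>2 > \<dots> > n\<^sub>d > n\<close>.\<close>

fun chain_coeff :: "nat \<Rightarrow> nat list \<Rightarrow> nat \<Rightarrow> real" where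
  "chain_coeff n [] m = (if m = n then 1 else 0)"
| "chain_coeff n (s1 # r) m = (\<Sum>k<m. chain_coeff n r k) / (2 * real m) ^ s1"

lemma chain_coeff_nonneg: "0 \<le> chain_coeff n s m"
  by (induction s arbitrary: m) (auto intro!: sum_nonneg divide_nonneg_nonneg)

lemma chain_coeff_0: "s \<noteq> [] \<Longrightarrow> chain_coeff n s 0 = 0"
  by (cases s) auto

lemma chain_coeff_le_1: "\<forall>j\<in>set s. 1 \<le> j \<Longrightarrow> chain_coeff n s m \<le> 1"
proof (induction s arbitrary: m)
  case (Cons s1 r)
  then have IH: "\<And>k. chain_coeff n r k \<le> 1" and s1: "1 \<le> s1" by auto
  show ?case
  proof (cases "m = 0")
    case False
    have "(\<Sum>k<m. chain_coeff n r k) \<le> real m"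
      using sum_mono[of "{..<m}" "chain_coeff n r" "\<lambda>k. 1"] IH by simp
    moreover have "2 * real m \<le> (2 * real m) ^ s1"
      using power_increasing[OF s1, of "2 * real m"] False by simp
    ultimately have "chain_coeff n (s1 # r) m \<le> real m / (2 * real m)"
      using False by (auto intro!: frac_le sum_nonneg chain_coeff_nonneg)
    also have "\<dots> \<le> 1" using False by simp
    finally show ?thesis .
  qed simp
qed simp

lemma sum_chain_coeff_le: "\<forall>j\<in>set s. 1 \<le> j \<Longrightarrow> (\<Sum>k<m. chain_coeff n s k) \<le> real m"
  using sum_mono[of "{..<m}" "chain_coeff n s" "\<lambda>k. 1"] chain_coeff_le_1 by simp

lemma a_series_chain_coeff_Nil: "a_series (chain_coeff n []) = (\<lambda>y. a n (sin y))"
proof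
  fix y
  have "(\<lambda>m. chain_coeff n [] m * central_coeff m * (sin y ^ 2) ^ m)
      = (\<lambda>m. if m = n then central_coeff n * (sin y ^ 2) ^ n else 0)"
    by auto
  then show "a_series (chain_coeff n []) y = a n (sin y)"
    using sums_single[of n "\<lambda>_. central_coeff n * (sin y ^ 2) ^ n"]
    unfolding a_series_def pseries_def a_eq_central_coeff by (simp add: sums_iff)
qed

lemma conv_unit_disc_chain_coeff:
  "\<forall>j\<in>set s. 1 \<le> j \<Longrightarrow> conv_unit_disc (\<lambda>m. chain_coeff n s m * central_coeff m)"
  by (rule conv_unit_disc_linear_bound[of _ 1])
    (auto simp: abs_mult chain_coeff_nonneg central_coeff_nonneg
      intro!: order_trans[OF mult_le_one] chain_coeff_le_1 central_coeff_le_1)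

lemma conv_unit_disc_sum_chain_coeff:
  "\<forall>j\<in>set s. 1 \<le> j \<Longrightarrow> conv_unit_disc (\<lambda>m. (\<Sum>k<m. chain_coeff n s k) * central_coeff m)"
proof (rule conv_unit_disc_linear_bound[of _ 1])
  fix m assume s: "\<forall>j\<in>set s. 1 \<le> j"
  have "\<bar>(\<Sum>k<m. chain_coeff n s k) * central_coeff m\<bar> \<le> real m * 1"
    unfolding abs_mult using sum_chain_coeff_le[OF s] central_coeff_le_1[of m]
    by (intro mult_mono) (auto simp: sum_nonneg chain_coeff_nonneg central_coeff_nonneg)
  then show "\<bar>(\<Sum>k<m. chain_coeff n s k) * central_coeff m\<bar> \<le> 1 * (real m + 1)" by simp
qed

lemma lword_tan_density_W:
  "\<forall>j\<in>set s. 1 \<le> j \<Longrightarrow> lword_tan_density (W s n) (a_series (chain_coeff n s))"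
proof (induction s)
  case Nil
  show ?case unfolding a_series_chain_coeff_Nil by (rule lword_tan_density_W_Nil)
next
  case (Cons s1 r)
  then have r: "\<forall>j\<in>set r. 1 \<le> j" by simp
  obtain k where s1: "s1 = Suc k" using Cons.prems by (cases s1) auto
  define P where "P = (\<lambda>m. \<Sum>k<m. chain_coeff n r k)"
  have conv_c: "conv_unit_disc (\<lambda>m. chain_coeff n r m * central_coeff m)"
    by (rule conv_unit_disc_chain_coeff[OF r])
  have conv_P: "conv_unit_disc (\<lambda>m. P m * central_coeff m)"
    unfolding P_def by (rule conv_unit_disc_sum_chain_coeff[OF r])
  have P0: "P 0 = 0" by (simp add: P_def)
  have "lword_tan_density (cat (p (Suc k)) (W r n)) (a_series (chain_coeff n (s1 # r)))"
  proof (rule lword_tan_density_cat_p[OF Cons.IH[OF r]])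
    fix y assume y: "y \<in> Ipi"
    have "cot_prim_iter k (\<lambda>y. prim (\<lambda>t. tan t * a_series (chain_coeff n r) t) y
          - prim (\<lambda>t. csc t * prim (\<lambda>u. sec u * (tan u * a_series (chain_coeff n r) u)) t) y) y
        = cot_prim_iter k (a_series (\<lambda>m. P m / (2 * real m))) y"
      using prim_tan_sub_prim_csc_prim_sec[OF conv_c conv_P[unfolded P_def]]
      by (intro cot_prim_iter_cong[OF _ y]) (simp add: P_def)
    also have "\<dots> = a_series (\<lambda>m. P m / (2 * real m) ^ Suc k) y"
      using vanishing_prim_a_series_div[OF conv_c conv_P[unfolded P_def]]
      by (intro cot_prim_iter_a_series_div[OF conv_P P0 _ y]) (simp add: P_def)
    also have "(\<lambda>m. P m / (2 * real m) ^ Suc k) = chain_coeff n (s1 # r)"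
      using s1 by (simp add: P_def fun_eq_iff)
    finally show "cot_prim_iter k (\<lambda>y. prim (\<lambda>t. tan t * a_series (chain_coeff n r) t) y
          - prim (\<lambda>t. csc t * prim (\<lambda>u. sec u * (tan u * a_series (chain_coeff n r) u)) t) y) y
        = a_series (chain_coeff n (s1 # r)) y" .
  qed
  then show ?case by (simp add: W_def s1 del: chain_coeff.simps)
qed

lemma has_real_derivative_iter_int_lw_W:
  assumes s: "\<forall>j\<in>set s. 1 \<le> j" and y: "y \<in> Ipi"
  shows "(iter_int_lw (W s n) has_real_derivative tan y * a_series (chain_coeff n s) y) (at y)"
proof -
  have "continuous_on Ipi (\<lambda>t. tan t * a_series (chain_coeff n s) t)"
    using vanishing_tan_mult_a_series[OF conv_unit_disc_chain_coeff[OF s]] vanishing_def by blast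
  from has_real_derivative_prim[OF this y] show ?thesis
    by (rule has_field_derivative_transform_within_open[OF _ _ y])
      (auto simp: iter_int_lw_tan_density[OF lword_tan_density_W[OF s]])
qed

section \<open>Regrouping the multiple sum\<close>

definition chains :: "nat \<Rightarrow> nat \<Rightarrow> nat list set" where
  "chains n d = {ns. length ns = d \<and> sorted_wrt (>) ns \<and> (\<forall>m\<in>set ns. n < m)}"

definition head_or :: "nat \<Rightarrow> nat list \<Rightarrow> nat" where
  "head_or n ns = (case ns of [] \<Rightarrow> n | m # _ \<Rightarrow> m)"

definition chain_denom :: "nat list \<Rightarrow> nat list \<Rightarrow> real" where
  "chain_denom s ns = (\<Prod>i<length s. (2 * real (ns ! i)) ^ (s ! i))"

lemma chain_denom_Cons: "chain_denom (s1 # r) (m # ns) = (2 * real m) ^ s1 * chain_denom r ns"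
  unfolding chain_denom_def by (simp only: length_Cons prod.lessThan_Suc_shift nth_Cons_0 nth_Cons_Suc)

lemma chain_denom_nonneg: "0 \<le> chain_denom s ns"
  unfolding chain_denom_def by (auto intro!: prod_nonneg)

lemma chains_0: "chains n 0 = {[]}"
  by (auto simp: chains_def)

lemma Cons_mem_chains_Suc: "m # ns \<in> chains n (Suc d) \<longleftrightarrow> ns \<in> chains n d \<and> head_or n ns < m"
  by (cases ns) (auto simp: chains_def head_or_def)

lemma chains_Suc:
  "chains n (Suc d) = (\<lambda>(m, ns). m # ns) ` (SIGMA m:UNIV. {ns \<in> chains n d. head_or n ns < m})"
proof (intro equalityI subsetI)
  fix x assume x: "x \<in> chains n (Suc d)"
  then obtain m ns where "x = m # ns" by (cases x) (auto simp: chains_def)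
  with x show "x \<in> (\<lambda>(m, ns). m # ns) ` (SIGMA m:UNIV. {ns \<in> chains n d. head_or n ns < m})"
    using Cons_mem_chains_Suc by (auto intro!: image_eqI[of _ _ "(m, ns)"])
qed (auto simp: Cons_mem_chains_Suc)

lemma has_sum_chains:
  assumes "\<And>m. 0 \<le> g m" and "((\<lambda>m. chain_coeff n s m * g m) has_sum T) UNIV"
  shows "((\<lambda>ns. g (head_or n ns) / chain_denom s ns) has_sum T) (chains n (length s))"
  using assms
proof (induction s arbitrary: g T)
  case Nil
  have "((\<lambda>m. chain_coeff n [] m * g m) has_sum g n) {n}"
    by (rule has_sum_finiteI) simp_all
  then have "((\<lambda>m. chain_coeff n [] m * g m) has_sum g n) UNIV"
    by (rule has_sum_cong_neutral[THEN iffD1, rotated -1]) auto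
  then have "T = g n" using Nil.prems(2) has_sum_unique by blast
  then show ?case
    by (simp add: chains_0 head_or_def chain_denom_def has_sum_finiteI)
next
  case (Cons s1 r)
  define B where "B m = {ns \<in> chains n (length r). head_or n ns < m}" for m
  define f where "f = (\<lambda>(m, ns). g m / (2 * real m) ^ s1 * (1 / chain_denom r ns))"
  have inner: "((\<lambda>ns. f (m, ns)) has_sum (chain_coeff n (s1 # r) m * g m)) (B m)" for m
  proof -
    define below where "below k = (if k < m then 1 else (0::real))" for k
    have "((\<lambda>k. chain_coeff n r k * below k) has_sum (\<Sum>k<m. chain_coeff n r k)) {..<m}"
      by (rule has_sum_finiteI) (simp_all add: below_def)
    then have "((\<lambda>k. chain_coeff n r k * below k) has_sum (\<Sum>k<m. chain_coeff n r k)) UNIV"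
      by (rule has_sum_cong_neutral[THEN iffD1, rotated -1]) (auto simp: below_def)
    then have "((\<lambda>ns. below (head_or n ns) / chain_denom r ns) has_sum (\<Sum>k<m. chain_coeff n r k)) (chains n (length r))"
      by (rule Cons.IH[rotated]) (simp add: below_def)
    then have "((\<lambda>ns. below (head_or n ns) / chain_denom r ns) has_sum (\<Sum>k<m. chain_coeff n r k)) (B m)"
      by (rule has_sum_cong_neutral[THEN iffD1, rotated -1]) (auto simp: B_def below_def)
    from has_sum_cmult_right[OF this, of "g m / (2 * real m) ^ s1"]
    have "((\<lambda>ns. f (m, ns)) has_sum (g m / (2 * real m) ^ s1 * (\<Sum>k<m. chain_coeff n r k))) (B m)"
      by (rule has_sum_cong[THEN iffD1, rotated -1]) (auto simp: f_def B_def below_def)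
    then show ?thesis by (simp add: mult.commute)
  qed
  have "f summable_on Sigma UNIV B"
    using Cons.prems chain_denom_nonneg
    by (intro summable_on_SigmaI[OF inner]) (auto simp: has_sum_imp_summable f_def)
  from has_sum_SigmaI[OF inner Cons.prems(2) this]
  have "(((\<lambda>ns. g (head_or n ns) / chain_denom (s1 # r) ns) \<circ> (\<lambda>(m, ns). m # ns)) has_sum T) (Sigma UNIV B)"
    by (simp add: o_def f_def head_or_def chain_denom_Cons case_prod_beta')
  moreover have "inj_on (\<lambda>(m, ns). m # ns) (Sigma UNIV B)" by (auto simp: inj_on_def)
  ultimately show ?case
    unfolding length_Cons chains_Suc B_def[symmetric] by (simp add: has_sum_reindex)
qed

section \<open>Convergence up to the endpoints\<close>

lemma diff_fourth_powers_le:
  fixes u v :: real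
  assumes "0 \<le> v" "v \<le> u"
  shows "u^4 - v^4 \<le> 4 * (u - v) * u^3"
proof -
  have "u^2 * v \<le> u^2 * u" using assms by (intro mult_left_mono) auto
  moreover have "u * v^2 \<le> u * u^2" using assms by (intro mult_left_mono power_mono) auto
  moreover have "v^3 \<le> u^3" using assms by (intro power_mono) auto
  ultimately have sum_le: "u^3 + u^2 * v + u * v^2 + v^3 \<le> 4 * u^3"
    by (simp add: power2_eq_square power3_eq_cube)
  have "u^4 - v^4 = (u - v) * (u^3 + u^2 * v + u * v^2 + v^3)"
    by (simp add: algebra_simps power2_eq_square power3_eq_cube power4_eq_xxxx)
  also have "\<dots> \<le> (u - v) * (4 * u^3)"
    using assms by (intro mult_left_mono[OF sum_le]) simp
  finally show ?thesis by (simp add: algebra_simps)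
qed

lemma powr_neg_three_quarters_le:
  "real (Suc m) powr (-3/4) \<le> 4 * (real (Suc m) powr (1/4) - real m powr (1/4))"
proof -
  define u where "u = real (Suc m) powr (1/4)"
  define v where "v = real m powr (1/4)"
  have u_pow: "u ^ k = real (Suc m) powr (real k / 4)" for k
    unfolding u_def by (simp add: powr_power)
  have v4: "v ^ 4 = real m"
    unfolding v_def by (cases "m = 0") (simp_all add: powr_power)
  have u: "0 < u" unfolding u_def by simp
  have vu: "0 \<le> v" "v \<le> u" unfolding u_def v_def by (auto intro!: powr_mono2)
  have "1 \<le> 4 * (u - v) * u^3"
    using diff_fourth_powers_le[OF vu] u_pow[of 4] v4 by simp
  moreover have "0 < u^3" using u by simp
  ultimately have "1 / u^3 \<le> 4 * (u - v)"
    by (simp add: pos_divide_le_eq)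
  moreover have "real (Suc m) powr (-3/4) = 1 / u^3"
    by (simp add: u_pow powr_minus_divide)
  ultimately show ?thesis unfolding u_def v_def by simp
qed

lemma sum_powr_neg_three_quarters_le: "(\<Sum>k<Suc m. real k powr (-3/4)) \<le> 4 * real m powr (1/4)"
proof (induction m)
  case (Suc m)
  then show ?case
    using powr_neg_three_quarters_le[of m] by simp
qed simp

lemma chain_coeff_le_powr:
  "s \<noteq> [] \<Longrightarrow> \<forall>j\<in>set s. 1 \<le> j \<Longrightarrow> chain_coeff n s m \<le> 2 ^ length s * real m powr (-3/4)"
proof (induction s arbitrary: m)
  case (Cons s1 r)
  then have s1: "1 \<le> s1" and r: "\<forall>j\<in>set r. 1 \<le> j" by auto
  show ?case
  proof (cases "m = 0")
    case False
    define D :: real where "D = 2 ^ length r"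
    have sum_le: "(\<Sum>k<m. chain_coeff n r k) \<le> D * (4 * real m powr (1/4))"
    proof (cases "r = []")
      case True
      have "(\<Sum>k<m. chain_coeff n r k) \<le> 1" unfolding True by (simp add: sum.If_cases)
      also have "1 \<le> 4 * real m powr (1/4)"
        using ge_one_powr_ge_zero[of "real m" "1/4"] False by simp
      finally show ?thesis by (simp add: D_def True)
    next
      case False
      have "(\<Sum>k<m. chain_coeff n r k) \<le> (\<Sum>k<Suc m. D * real k powr (-3/4))"
        unfolding D_def using Cons.IH[OF False r]
        by (intro order_trans[OF sum_mono sum_mono2]) auto
      also have "\<dots> \<le> D * (4 * real m powr (1/4))"
        unfolding sum_distrib_left[symmetric] D_def
        by (intro mult_left_mono sum_powr_neg_three_quarters_le) simp
      finally show ?thesis .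
    qed
    have "2 * real m \<le> (2 * real m) ^ s1"
      using power_increasing[OF s1, of "2 * real m"] False by simp
    then have "chain_coeff n (s1 # r) m \<le> (\<Sum>k<m. chain_coeff n r k) / (2 * real m)"
      using False by (auto intro!: divide_left_mono sum_nonneg chain_coeff_nonneg)
    also have "\<dots> \<le> D * (4 * real m powr (1/4)) / (2 * real m)"
      by (rule divide_right_mono[OF sum_le]) simp
    also have "\<dots> = 2 ^ length (s1 # r) * (real m powr (1/4) / real m)"
      by (simp add: D_def)
    also have "real m powr (1/4) / real m = real m powr (-3/4)"
      using powr_diff[of "real m" "1/4" 1] False by simp
    finally show ?thesis .
  qed (simp add: chain_coeff_0)
qed simp

lemma summable_chain_coeff_central_coeff:
  assumes "s \<noteq> []" "\<forall>j\<in>set s. 1 \<le> j"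
  shows "summable (\<lambda>m. chain_coeff n s m * central_coeff m)"
proof (rule summable_comparison_test')
  show "summable (\<lambda>m. 2 ^ length s * real m powr (-5/4))"
    by (intro summable_mult) (simp add: summable_real_powr_iff)
  show "norm (chain_coeff n s m * central_coeff m) \<le> 2 ^ length s * real m powr (-5/4)" for m
  proof (cases "m = 0")
    case False
    have "chain_coeff n s m \<le> 2 ^ length s * real m powr (-3/4)"
      by (rule chain_coeff_le_powr[OF assms])
    moreover have "central_coeff m \<le> real m powr (-1/2)"
      using False by (intro central_coeff_le_powr) simp
    ultimately have "norm (chain_coeff n s m * central_coeff m)
        \<le> (2 ^ length s * real m powr (-3/4)) * real m powr (-1/2)"
      using chain_coeff_nonneg central_coeff_nonneg by (simp add: mult_mono)
    also have "\<dots> = 2 ^ length s * real m powr (-5/4)"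
      by (simp add: mult.assoc powr_add[symmetric])
    finally show ?thesis .
  qed (simp add: chain_coeff_0[OF assms(1)])
qed

lemma sums_a_series_chain_coeff:
  assumes "s \<noteq> []" "\<forall>j\<in>set s. 1 \<le> j"
  shows "(\<lambda>m. chain_coeff n s m * a m (sin y)) sums a_series (chain_coeff n s) y"
proof -
  have "summable (\<lambda>m. chain_coeff n s m * a m (sin y))"
    by (rule summable_comparison_test'[OF summable_chain_coeff_central_coeff[OF assms, of n]])
      (simp add: abs_mult chain_coeff_nonneg a_nonneg mult_left_mono[OF a_sin_le_central_coeff])
  then show ?thesis unfolding a_series_eq_suminf by (rule summable_sums)
qed

lemma has_sum_chains_a:
  assumes "s \<noteq> []" "\<forall>j\<in>set s. 1 \<le> j"
  shows "((\<lambda>ns. a (hd ns) (sin y) / chain_denom s ns) has_sum a_series (chain_coeff n s) y) (chains n (length s))"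
proof -
  have "((\<lambda>m. chain_coeff n s m * a m (sin y)) has_sum a_series (chain_coeff n s) y) UNIV"
    by (rule sums_nonneg_imp_has_sum[OF sums_a_series_chain_coeff[OF assms]])
      (simp add: chain_coeff_nonneg a_nonneg)
  from has_sum_chains[OF a_nonneg this] show ?thesis
    by (rule has_sum_cong[THEN iffD1, rotated -1])
      (use assms(1) in \<open>auto simp: chains_def head_or_def split: list.split\<close>)
qed

lemma isCont_a_series_chain_coeff:
  assumes "s \<noteq> []" "\<forall>j\<in>set s. 1 \<le> j"
  shows "isCont (a_series (chain_coeff n s)) y"
proof -
  have cont: "continuous_on {-1..1} (pseries (\<lambda>m. chain_coeff n s m * central_coeff m))"
    using summable_chain_coeff_central_coeff[OF assms]
    by (intro continuous_on_pseries_closed) (simp add: abs_mult chain_coeff_nonneg central_coeff_nonneg)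
  have sin_sq: "sin z ^ 2 \<in> {-1..1}" for z :: real
  proof -
    have "0 \<le> sin z ^ 2" by simp
    moreover have "sin z ^ 2 \<le> 1"
      using sin_cos_squared_add[of z] zero_le_power2[of "cos z"] by linarith
    ultimately show ?thesis unfolding atLeastAtMost_iff by linarith
  qed
  have "((\<lambda>z. sin z ^ 2) \<longlongrightarrow> sin y ^ 2) (at y)"
    by (intro tendsto_intros)
  from continuous_on_tendsto_compose[OF cont this sin_sq always_eventually] sin_sq
  show ?thesis
    unfolding a_series_def[abs_def] isCont_def by blast
qed

text \<open>At \<open>z = 0\<close> both sides vanish: \<open>cot 0 = 0\<close> by the convention \<open>x / 0 = 0\<close>.\<close>

lemma cot_deriv_iter_int_lw_W:
  assumes s: "s \<noteq> []" "\<forall>j\<in>set s. 1 \<le> j" and z: "z \<in> Ipi"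
  shows "cot z * deriv (iter_int_lw (W s n)) z = a_series (chain_coeff n s) z"
proof -
  have "deriv (iter_int_lw (W s n)) z = tan z * a_series (chain_coeff n s) z"
    by (rule DERIV_imp_deriv[OF has_real_derivative_iter_int_lw_W[OF s(2) z]])
  moreover have "cos z \<noteq> 0" using cos_gt_zero_Ipi[OF z] by simp
  ultimately show ?thesis
    using sin_eq_0_Ipi[OF z] chain_coeff_0[OF s(1)]
    by (cases "z = 0") (simp_all add: a_series_0 cot_def tan_def)
qed

lemma tendsto_cot_deriv_iter_int_lw_W:
  assumes s: "s \<noteq> []" "\<forall>j\<in>set s. 1 \<le> j" and ev: "\<forall>\<^sub>F z in at x within A. z \<in> Ipi"
  shows "((\<lambda>z. cot z * deriv (iter_int_lw (W s n)) z) \<longlongrightarrow> a_series (chain_coeff n s) x) (at x within A)"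
proof (rule Lim_transform_eventually)
  show "(a_series (chain_coeff n s) \<longlongrightarrow> a_series (chain_coeff n s) x) (at x within A)"
    using continuous_at_imp_continuous_at_within[OF isCont_a_series_chain_coeff[OF s]]
    by (simp add: continuous_within)
  show "\<forall>\<^sub>F z in at x within A. a_series (chain_coeff n s) z = cot z * deriv (iter_int_lw (W s n)) z"
    using ev by eventually_elim (simp add: cot_deriv_iter_int_lw_W[OF s])
qed

theorem theorem2p1:
  fixes n :: nat and s :: "nat list" and y :: real
  assumes "s \<noteq> []" and "\<forall>j\<in>set s. 1 \<le> j"
    and "-pi/2 \<le> y" and "y \<le> pi/2"
  shows "\<exists>L. ((\<lambda>ns. a (hd ns) (sin y) / (\<Prod>i<length s. (2 * real (ns ! i)) ^ (s ! i)))
                 has_sum L) {ns. length ns = length s \<and> sorted_wrt (>) ns \<and> (\<forall>m\<in>set ns. n < m)}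
           \<and> (if y = pi/2 then
                ((\<lambda>z. cot z * deriv (iter_int_lw (W s n)) z) \<longlongrightarrow> L) (at_left (pi/2))
              else if y = -pi/2 then
                ((\<lambda>z. cot z * deriv (iter_int_lw (W s n)) z) \<longlongrightarrow> L) (at_right (-pi/2))
              else
                iter_int_lw (W s n) differentiable (at y)
                \<and> L = cot y * deriv (iter_int_lw (W s n)) y)"
proof -
  note s = assms(1,2)
  note sum = has_sum_chains_a[OF s, of y n, unfolded chains_def chain_denom_def]
  have left: "\<forall>\<^sub>F z in at_left (pi/2). z \<in> Ipi"
    using eventually_at_left_real[of "-(pi/2)" "pi/2"] by simp
  have right: "\<forall>\<^sub>F z in at_right (-(pi/2)). z \<in> Ipi"
    using eventually_at_right_real[of "-(pi/2)" "pi/2"] by simp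
  consider "y = pi/2" | "y = -pi/2" | "y \<in> Ipi" using assms(3,4) by fastforce
  then show ?thesis
  proof cases
    case 1
    show ?thesis using sum tendsto_cot_deriv_iter_int_lw_W[OF s left] unfolding 1 by auto
  next
    case 2
    show ?thesis using sum tendsto_cot_deriv_iter_int_lw_W[OF s right] unfolding 2 by auto
  next
    case 3
    then have "y \<noteq> pi/2" "y \<noteq> -pi/2" by auto
    with sum show ?thesis
      using has_real_derivative_iter_int_lw_W[OF s(2) 3] cot_deriv_iter_int_lw_W[OF s 3]
      by (auto intro: differentiableI simp: has_field_derivative_def)
  qed
qed

end
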